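(* Let $K\in\mathbb{Z}_{>0}$ and let $\{\mathcal{N}_j\}_{j=1}^K$ be a set of $K$ known $n$-qubit quantum channels. Let $\ell:[0,1]\to\mathbb{R}$ be convex and $L$-Lipschitz. There exists an online learning strategy that, when presented sequentially with channel test operators $E_{A,B}^{(t)}$, $t\in\{1,\dots,T\}$, and associated losses $\ell_t(\cdot)=\ell((\cdot)-b_t)$ with $b_t\in[0,1]$, outputs Choi matrix hypotheses of the form $N_{A,B}^{(t)}=\sum_{j=1}^K p_j^{(t)}C(\mathcal{N}_j)$ with $(p_1^{(t)},\dots,p_K^{(t)})$ a probability vector, such that \[ \sum_{t=1}^T \ell_t\big(\mathrm{Tr}[E_{A,B}^{(t)}N_{A,B}^{(t)}]\big) - \sum_{t=1}^T \ell_t\big(\mathrm{Tr}[E_{A,B}^{(t)}C_{A,B}^{\mathcal{N}}]\big) = \mathcal{O}\big(L\sqrt{T\log K}\big) \] for every $\mathcal{N}$ in the convex hull of $\{\mathcal{N}_j\}_{j=1}^K$.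
   Context: $A,B$ are $n$-qubit systems, $d=2^n$. The Choi matrix of a linear map $\mathcal{N}$ is $C(\mathcal{N})=C^{\mathcal{N}}_{A,B}=\sum_{i,j=0}^{d-1}|i\rangle\langle j|\otimes\mathcal{N}(|i\rangle\langle j|)$. A channel test operator is $E_{A,B}\geq0$ with $E_{A,B}\leq\sigma_A\otimes\mathbb{1}_B$ for some density operator $\sigma_A$. In round $t$ the adversary presents $E^{(t)}$, the learner outputs $N^{(t)}$ (depending only on past information) and predicts $\mathrm{Tr}[E^{(t)}N^{(t)}]$, then $b_t$ is revealed. *)

theory Defs
  imports "HOL-Analysis.Analysis" "Jordan_Normal_Form.Matrix"
begin

definition mtrace :: "complex mat \<Rightarrow> complex" where
  "mtrace A = (\<Sum>i<dim_row A. A $$ (i, i))"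

definition msum :: "nat \<Rightarrow> ('i \<Rightarrow> complex mat) \<Rightarrow> 'i list \<Rightarrow> complex mat" where
  "msum m f xs = foldr (\<lambda>x acc. f x + acc) xs (0\<^sub>m m m)"

text \<open>Kronecker (tensor) product; the first factor is the outer (A) system.\<close>
definition kron :: "complex mat \<Rightarrow> complex mat \<Rightarrow> complex mat" where
  "kron A B = mat (dim_row A * dim_row B) (dim_col A * dim_col B)
     (\<lambda>(i, j). A $$ (i div dim_row B, j div dim_col B) * B $$ (i mod dim_row B, j mod dim_col B))"

definition psd :: "nat \<Rightarrow> complex mat \<Rightarrow> bool" where
  "psd m A \<longleftrightarrow> A \<in> carrier_mat m m \<and>
     (\<forall>v \<in> carrier_vec m. Im (conjugate v \<bullet> (A *\<^sub>v v)) = 0 \<and> 0 \<le> Re (conjugate v \<bullet> (A *\<^sub>v v)))"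

definition loewner_le :: "nat \<Rightarrow> complex mat \<Rightarrow> complex mat \<Rightarrow> bool" where
  "loewner_le m A B \<longleftrightarrow> A \<in> carrier_mat m m \<and> B \<in> carrier_mat m m \<and> psd m (B - A)"

definition density_op :: "nat \<Rightarrow> complex mat \<Rightarrow> bool" where
  "density_op m \<sigma> \<longleftrightarrow> psd m \<sigma> \<and> mtrace \<sigma> = 1"

definition ketbra :: "nat \<Rightarrow> nat \<Rightarrow> nat \<Rightarrow> complex mat" where
  "ketbra d i j = mat d d (\<lambda>(a, b). if a = i \<and> b = j then 1 else 0)"

text \<open>Linear maps on d x d matrices (only their action on d x d matrices matters).\<close>
definition linear_map_on :: "nat \<Rightarrow> (complex mat \<Rightarrow> complex mat) \<Rightarrow> bool" where
  "linear_map_on d \<Phi> \<longleftrightarrow>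
     (\<forall>X \<in> carrier_mat d d. \<Phi> X \<in> carrier_mat d d) \<and>
     (\<forall>X \<in> carrier_mat d d. \<forall>Y \<in> carrier_mat d d. \<Phi> (X + Y) = \<Phi> X + \<Phi> Y) \<and>
     (\<forall>c. \<forall>X \<in> carrier_mat d d. \<Phi> (c \<cdot>\<^sub>m X) = c \<cdot>\<^sub>m \<Phi> X)"

text \<open>(id_m \<otimes> \<Phi>) applied to an (m d) x (m d) matrix: \<Phi> acts on each d x d block.\<close>
definition id_tensor :: "nat \<Rightarrow> nat \<Rightarrow> (complex mat \<Rightarrow> complex mat) \<Rightarrow> complex mat \<Rightarrow> complex mat" where
  "id_tensor m d \<Phi> X = mat (m * d) (m * d)
     (\<lambda>(i, j). \<Phi> (mat d d (\<lambda>(a, b). X $$ ((i div d) * d + a, (j div d) * d + b))) $$ (i mod d, j mod d))"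

definition completely_positive :: "nat \<Rightarrow> (complex mat \<Rightarrow> complex mat) \<Rightarrow> bool" where
  "completely_positive d \<Phi> \<longleftrightarrow>
     (\<forall>m X. psd (m * d) X \<longrightarrow> psd (m * d) (id_tensor m d \<Phi> X))"

definition trace_preserving :: "nat \<Rightarrow> (complex mat \<Rightarrow> complex mat) \<Rightarrow> bool" where
  "trace_preserving d \<Phi> \<longleftrightarrow> (\<forall>X \<in> carrier_mat d d. mtrace (\<Phi> X) = mtrace X)"

definition quantum_channel :: "nat \<Rightarrow> (complex mat \<Rightarrow> complex mat) \<Rightarrow> bool" where
  "quantum_channel n \<Phi> \<longleftrightarrow> linear_map_on (2 ^ n) \<Phi> \<and>
     completely_positive (2 ^ n) \<Phi> \<and> trace_preserving (2 ^ n) \<Phi>"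

definition choi :: "nat \<Rightarrow> (complex mat \<Rightarrow> complex mat) \<Rightarrow> complex mat" where
  "choi d \<Phi> = msum (d * d) (\<lambda>(i, j). kron (ketbra d i j) (\<Phi> (ketbra d i j)))
                 (List.product [0..<d] [0..<d])"

definition channel_test_op :: "nat \<Rightarrow> complex mat \<Rightarrow> bool" where
  "channel_test_op d E \<longleftrightarrow> psd (d * d) E \<and>
     (\<exists>\<sigma>. density_op d \<sigma> \<and> loewner_le (d * d) E (kron \<sigma> (1\<^sub>m d)))"

definition prob_vec :: "nat \<Rightarrow> (nat \<Rightarrow> real) \<Rightarrow> bool" where
  "prob_vec K p \<longleftrightarrow> (\<forall>j<K. 0 \<le> p j) \<and> (\<Sum>j<K. p j) = 1"

definition in_channel_hull :: "nat \<Rightarrow> nat \<Rightarrow> (nat \<Rightarrow> complex mat \<Rightarrow> complex mat)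
     \<Rightarrow> (complex mat \<Rightarrow> complex mat) \<Rightarrow> bool" where
  "in_channel_hull d K Ns \<Phi> \<longleftrightarrow> (\<exists>q. prob_vec K q \<and>
     (\<forall>X \<in> carrier_mat d d. \<Phi> X = msum d (\<lambda>j. complex_of_real (q j) \<cdot>\<^sub>m Ns j X) [0..<K]))"

definition mixture_choi :: "nat \<Rightarrow> nat \<Rightarrow> (nat \<Rightarrow> complex mat \<Rightarrow> complex mat)
     \<Rightarrow> (nat \<Rightarrow> real) \<Rightarrow> complex mat" where
  "mixture_choi d K Ns p = msum (d * d) (\<lambda>j. complex_of_real (p j) \<cdot>\<^sub>m choi d (Ns j)) [0..<K]"

end

(* The learner runs Hedge (exponential weights) over the K given channels. A mixture
   sum_j p_j C(N_j) predicts sum_j p_j a_j with a_j = Re Tr[E C(N_j)], and a_j lies in [0,1]: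
   complete positivity gives Tr[E C(N)] >= 0 for every PSD E (by a dilation of E), and trace
   preservation gives Tr[(sigma (x) 1) C(N)] = Tr sigma = 1, which bounds Tr[E C(N)] by 1
   since E <= sigma (x) 1. So predictions are averages of expert advice in [0,1], and by
   convexity the loss can be replaced by its linearisation at a subgradient bounded by L.
   Hedge with learning rate sqrt(ln K / T) / L then has regret at most 2 L sqrt(T ln K)
   against every fixed mixture, in particular the one defining a channel of the hull. *)

theory Submission
  imports Defs
begin

lemma convex_lipschitz_bounded_subgradient:
  fixes f :: "real \<Rightarrow> real"
  assumes cvx: "convex_on {a..b} f" and lip: "L-lipschitz_on {a..b} f" and x: "x \<in> {a..b}"
  shows "\<exists>g. \<bar>g\<bar> \<le> L \<and> (\<forall>z\<in>{a..b}. f x + g * (z - x) \<le> f z)"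
proof (cases "x = a")
  case True
  have "f x - L * (z - x) \<le> f z" if "z \<in> {a..b}" for z
    using lipschitz_onD[OF lip that x] True that by (auto simp: dist_real_def abs_le_iff)
  then show ?thesis
    using lipschitz_on_nonneg[OF lip] by (intro exI[of _ "-L"]) auto
next
  case False
  define slope where "slope y = (f x - f y) / (x - y)" for y
  have slope_sym: "slope y = (f y - f x) / (y - x)" for y
    by (metis slope_def minus_diff_eq minus_divide_divide)
  \<comment> \<open>the left derivative of \<open>f\<close> at \<open>x\<close>\<close>
  define g where "g = Sup (slope ` {a..<x})"
  have ne: "slope ` {a..<x} \<noteq> {}" using False x by auto
  have slope_bound: "\<bar>slope y\<bar> \<le> L" if "y \<in> {a..<x}" for y
    using lipschitz_onD[OF lip, of x y] x that
    by (simp add: slope_def dist_real_def abs_div pos_divide_le_eq)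
  then have bdd: "bdd_above (slope ` {a..<x})"
    by (intro bdd_aboveI2[of _ _ L]) (auto simp: abs_le_iff)
  have "\<bar>g\<bar> \<le> L"
    using cSup_upper[OF _ bdd] cSup_least[OF ne] slope_bound ne
    unfolding g_def by (fastforce simp: abs_le_iff)
  moreover have "f x + g * (z - x) \<le> f z" if z: "z \<in> {a..b}" for z
  proof (cases z x rule: linorder_cases)
    case less
    then have "slope z \<le> g" unfolding g_def using z by (intro cSup_upper[OF _ bdd]) auto
    then show ?thesis using less by (simp add: slope_def divide_le_eq algebra_simps)
  next
    case greater
    have "slope y \<le> slope z" if "y \<in> {a..<x}" for y
      using convex_on_slope_le[OF cvx, of y z x] that x z greater
      unfolding slope_sym[of y] slope_def[of z] by auto
    then have "g \<le> (f z - f x) / (z - x)"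
      unfolding g_def slope_sym[of z, symmetric] by (intro cSup_least[OF ne]) auto
    then show ?thesis using greater by (simp add: pos_le_divide_eq algebra_simps)
  qed simp
  ultimately show ?thesis by blast
qed

lemma exp_le_one_plus_square:
  fixes y :: real assumes "\<bar>y\<bar> \<le> 1" shows "exp y \<le> 1 + y + y\<^sup>2"
proof (cases "0 \<le> y")
  case True then show ?thesis using exp_bound assms by auto
next
  case False
  have "exp y * (1 - y) \<le> exp y * exp (- y)"
    using exp_ge_add_one_self[of "- y"] by (intro mult_left_mono) auto
  also have "\<dots> = 1" by (simp add: exp_minus)
  also have "1 \<le> (1 + y + y\<^sup>2) * (1 - y)"
    using False by (simp add: power2_eq_square algebra_simps mult_nonpos_nonneg)
  finally show ?thesis using False by (simp add: mult_le_cancel_right)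
qed

lemma prob_vec_average_01:
  assumes p: "prob_vec K p" and a: "\<And>j. j < K \<Longrightarrow> a j \<in> {0..1}"
  shows "(\<Sum>j<K. p j * a j) \<in> {0..1}"
proof -
  have "(\<Sum>j<K. p j * a j) \<le> (\<Sum>j<K. p j)"
    using p a by (intro sum_mono) (auto simp: prob_vec_def intro: mult_left_le)
  moreover have "0 \<le> (\<Sum>j<K. p j * a j)" using p a by (intro sum_nonneg) (auto simp: prob_vec_def)
  ultimately show ?thesis using p by (simp add: prob_vec_def)
qed

definition exp_weights :: "nat \<Rightarrow> real \<Rightarrow> (nat \<Rightarrow> real) \<Rightarrow> nat \<Rightarrow> real" where
  "exp_weights K \<eta> S j = exp (- \<eta> * S j) / (\<Sum>i<K. exp (- \<eta> * S i))"

lemma prob_vec_exp_weights: "0 < K \<Longrightarrow> prob_vec K (exp_weights K \<eta> S)"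
proof -
  assume "0 < K"
  then have "0 < (\<Sum>i<K. exp (- \<eta> * S i))" by (intro sum_pos) auto
  then show ?thesis
    by (auto simp: prob_vec_def exp_weights_def sum_divide_distrib[symmetric])
qed

lemma exp_weights_potential_step:
  fixes S c :: "nat \<Rightarrow> real"
  assumes K: "0 < K" and \<eta>: "0 \<le> \<eta>" "\<eta> * B \<le> 1" and c: "\<And>j. j < K \<Longrightarrow> \<bar>c j\<bar> \<le> B"
  shows "(\<Sum>j<K. exp (- \<eta> * (S j + c j)))
      \<le> (\<Sum>j<K. exp (- \<eta> * S j)) * exp (- \<eta> * (\<Sum>j<K. exp_weights K \<eta> S j * c j) + (\<eta> * B)\<^sup>2)"
proof -
  define W where "W = (\<Sum>j<K. exp (- \<eta> * S j))"
  define p where "p = exp_weights K \<eta> S"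
  have W: "0 < W" unfolding W_def using K by (intro sum_pos) auto
  have p: "prob_vec K p" unfolding p_def using prob_vec_exp_weights[OF K] .
  have exp_c: "exp (- \<eta> * c j) \<le> 1 - \<eta> * c j + (\<eta> * B)\<^sup>2" if "j < K" for j
  proof -
    have small: "\<bar>- \<eta> * c j\<bar> \<le> \<eta> * B" using c[OF that] \<eta> by (simp add: abs_mult mult_left_mono)
    then have "(- \<eta> * c j)\<^sup>2 \<le> (\<eta> * B)\<^sup>2" using power_mono[OF small abs_ge_zero, of 2] by simp
    then show ?thesis using exp_le_one_plus_square[of "- \<eta> * c j"] small \<eta> by simp
  qed
  have "exp (- \<eta> * (S j + c j)) = W * (p j * exp (- \<eta> * c j))" for j
    using W by (simp add: p_def exp_weights_def W_def distrib_left exp_add[symmetric])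
  then have "(\<Sum>j<K. exp (- \<eta> * (S j + c j))) = W * (\<Sum>j<K. p j * exp (- \<eta> * c j))"
    by (simp add: sum_distrib_left)
  also have "\<dots> \<le> W * (\<Sum>j<K. p j * (1 - \<eta> * c j + (\<eta> * B)\<^sup>2))"
    using W p exp_c by (intro mult_left_mono sum_mono) (auto simp: prob_vec_def)
  also have "(\<Sum>j<K. p j * (1 - \<eta> * c j + (\<eta> * B)\<^sup>2)) = 1 + (- \<eta> * (\<Sum>j<K. p j * c j) + (\<eta> * B)\<^sup>2)"
    using p by (simp add: prob_vec_def algebra_simps sum.distrib sum_subtractf
        sum_distrib_left[symmetric] sum_distrib_right[symmetric])
  also have "W * \<dots> \<le> W * exp (- \<eta> * (\<Sum>j<K. p j * c j) + (\<eta> * B)\<^sup>2)"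
    using W by (intro mult_left_mono exp_ge_add_one_self) auto
  finally show ?thesis by (simp add: W_def p_def)
qed

lemma exp_weights_potential:
  fixes c :: "nat \<Rightarrow> nat \<Rightarrow> real"
  assumes K: "0 < K" and \<eta>: "0 \<le> \<eta>" "\<eta> * B \<le> 1"
    and c: "\<And>r j. r < R \<Longrightarrow> j < K \<Longrightarrow> \<bar>c r j\<bar> \<le> B"
  defines "S r j \<equiv> \<Sum>s<r. c s j"
  shows "(\<Sum>j<K. exp (- \<eta> * S R j))
    \<le> K * exp (- \<eta> * (\<Sum>r<R. \<Sum>j<K. exp_weights K \<eta> (S r) j * c r j) + R * (\<eta> * B)\<^sup>2)"
  using c
proof (induction R)
  case 0 then show ?case by (simp add: S_def)
next
  case (Suc R)
  let ?loss = "\<lambda>r. \<Sum>j<K. exp_weights K \<eta> (S r) j * c r j"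
  have "(\<Sum>j<K. exp (- \<eta> * S (Suc R) j))
      \<le> (\<Sum>j<K. exp (- \<eta> * S R j)) * exp (- \<eta> * ?loss R + (\<eta> * B)\<^sup>2)"
    unfolding S_def sum.lessThan_Suc
    using exp_weights_potential_step[OF K \<eta>, of "c R"] Suc.prems by auto
  also have "\<dots> \<le> K * exp (- \<eta> * (\<Sum>r<R. ?loss r) + R * (\<eta> * B)\<^sup>2)
      * exp (- \<eta> * ?loss R + (\<eta> * B)\<^sup>2)"
    using Suc by (intro mult_right_mono) auto
  also have "\<dots> = K * exp (- \<eta> * (\<Sum>r<Suc R. ?loss r) + Suc R * (\<eta> * B)\<^sup>2)"
    by (simp add: mult.assoc exp_add[symmetric] algebra_simps)
  finally show ?case .
qed

lemma exp_weights_regret: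
  fixes c :: "nat \<Rightarrow> nat \<Rightarrow> real"
  assumes K: "0 < K" and \<eta>: "0 < \<eta>" "\<eta> * B \<le> 1"
    and c: "\<And>r j. r < T \<Longrightarrow> j < K \<Longrightarrow> \<bar>c r j\<bar> \<le> B" and q: "prob_vec K q"
  shows "(\<Sum>r<T. \<Sum>j<K. exp_weights K \<eta> (\<lambda>j. \<Sum>s<r. c s j) j * c r j)
           - (\<Sum>r<T. \<Sum>j<K. q j * c r j) \<le> ln K / \<eta> + \<eta> * T * B\<^sup>2"
proof -
  define S where "S r j = (\<Sum>s<r. c s j)" for r j
  define P where "P = (\<Sum>r<T. \<Sum>j<K. exp_weights K \<eta> (S r) j * c r j)"
  have potential: "(\<Sum>j<K. exp (- \<eta> * S T j)) \<le> K * exp (- \<eta> * P + T * (\<eta> * B)\<^sup>2)"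
    unfolding S_def P_def using exp_weights_potential[OF K _ \<eta>(2) c] \<eta>(1) by simp
  have expert: "P - S T j \<le> ln K / \<eta> + \<eta> * T * B\<^sup>2" if j: "j < K" for j
  proof -
    have "exp (- \<eta> * S T j) \<le> K * exp (- \<eta> * P + T * (\<eta> * B)\<^sup>2)"
      using member_le_sum[of j "{..<K}" "\<lambda>j. exp (- \<eta> * S T j)"] j potential by simp
    then have "- \<eta> * S T j \<le> ln K + (- \<eta> * P + T * (\<eta> * B)\<^sup>2)"
      using K by (simp add: ln_le_cancel_iff[symmetric] ln_mult del: ln_le_cancel_iff)
    then have "\<eta> * (P - S T j) \<le> \<eta> * (ln K / \<eta> + \<eta> * T * B\<^sup>2)"
      using \<eta> by (simp add: algebra_simps power2_eq_square)
    then show ?thesis using \<eta> by simp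
  qed
  have "(\<Sum>r<T. \<Sum>j<K. q j * c r j) = (\<Sum>j<K. q j * S T j)"
    by (simp add: S_def sum_distrib_left sum.swap[of _ "{..<T}"])
  moreover have "P = (\<Sum>j<K. q j * P)" using q by (simp add: prob_vec_def flip: sum_distrib_right)
  ultimately have "P - (\<Sum>r<T. \<Sum>j<K. q j * c r j) = (\<Sum>j<K. q j * (P - S T j))"
    by (simp add: right_diff_distrib sum_subtractf)
  also have "\<dots> \<le> (\<Sum>j<K. q j * (ln K / \<eta> + \<eta> * T * B\<^sup>2))"
    using q expert by (intro sum_mono mult_left_mono) (auto simp: prob_vec_def)
  also have "\<dots> = ln K / \<eta> + \<eta> * T * B\<^sup>2"
    using q by (simp add: prob_vec_def sum_distrib_right[symmetric])
  finally show ?thesis by (simp add: P_def S_def[abs_def])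
qed

definition bounded_subgradient :: "real set \<Rightarrow> (real \<Rightarrow> real) \<Rightarrow> real \<Rightarrow> real \<Rightarrow> real" where
  "bounded_subgradient X f L x = (SOME g. \<bar>g\<bar> \<le> L \<and> (\<forall>z\<in>X. f x + g * (z - x) \<le> f z))"

lemma bounded_subgradientD:
  assumes "convex_on {a..b} f" "L-lipschitz_on {a..b} f" "x \<in> {a..b}"
  shows "\<bar>bounded_subgradient {a..b} f L x\<bar> \<le> L"
    and "z \<in> {a..b} \<Longrightarrow> f x + bounded_subgradient {a..b} f L x * (z - x) \<le> f z"
  using someI_ex[OF convex_lipschitz_bounded_subgradient[OF assms]]
  by (auto simp: bounded_subgradient_def)

text \<open>Hedge over the experts \<open>A e j\<close>, run on linearised losses: in a round with input \<open>e\<close>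
  and target \<open>\<beta>\<close>, expert \<open>j\<close> is charged \<open>A e j\<close> times a subgradient of \<open>f\<close> at the learner's
  residual.\<close>

definition hedge_update :: "nat \<Rightarrow> real \<Rightarrow> (real \<Rightarrow> real) \<Rightarrow> real \<Rightarrow> ('e \<Rightarrow> nat \<Rightarrow> real)
    \<Rightarrow> (nat \<Rightarrow> real) \<Rightarrow> 'e \<times> real \<Rightarrow> nat \<Rightarrow> real" where
  "hedge_update K \<eta> f L A S eb j = S j +
     bounded_subgradient {-1..1} f L ((\<Sum>i<K. exp_weights K \<eta> S i * A (fst eb) i) - snd eb)
       * A (fst eb) j"

definition hedge_strategy :: "nat \<Rightarrow> real \<Rightarrow> (real \<Rightarrow> real) \<Rightarrow> real \<Rightarrow> ('e \<Rightarrow> nat \<Rightarrow> real)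
    \<Rightarrow> ('e \<times> real) list \<Rightarrow> nat \<Rightarrow> real" where
  "hedge_strategy K \<eta> f L A h = exp_weights K \<eta> (foldl (hedge_update K \<eta> f L A) (\<lambda>_. 0) h)"

lemma hedge_strategy_regret:
  fixes A :: "'e \<Rightarrow> nat \<Rightarrow> real"
  assumes K: "0 < K" and cvx: "convex_on {-1..1} f" and lip: "L-lipschitz_on {-1..1} f"
    and \<eta>: "0 < \<eta>" "\<eta> * L \<le> 1"
    and A: "\<And>r j. r < T \<Longrightarrow> j < K \<Longrightarrow> A (e r) j \<in> {0..1}"
    and \<beta>: "\<And>r. r < T \<Longrightarrow> \<beta> r \<in> {0..1}" and q: "prob_vec K q"
  shows "(\<Sum>r<T. f ((\<Sum>j<K. hedge_strategy K \<eta> f L A (map (\<lambda>s. (e s, \<beta> s)) [0..<r]) j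
                          * A (e r) j) - \<beta> r))
           - (\<Sum>r<T. f ((\<Sum>j<K. q j * A (e r) j) - \<beta> r)) \<le> ln K / \<eta> + \<eta> * T * L\<^sup>2"
proof -
  define S where "S r = foldl (hedge_update K \<eta> f L A) (\<lambda>_. 0) (map (\<lambda>s. (e s, \<beta> s)) [0..<r])" for r
  define p where "p r = exp_weights K \<eta> (S r)" for r
  define x where "x r = (\<Sum>j<K. p r j * A (e r) j) - \<beta> r" for r
  define y where "y r = (\<Sum>j<K. q j * A (e r) j) - \<beta> r" for r
  define g where "g r = bounded_subgradient {-1..1} f L (x r)" for r
  define c where "c r j = g r * A (e r) j" for r j
  have S_sum: "S r = (\<lambda>j. \<Sum>s<r. c s j)" for r
    by (induction r) (simp_all add: S_def hedge_update_def c_def g_def x_def p_def)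
  have x: "x r \<in> {-1..1}" and y: "y r \<in> {-1..1}" if "r < T" for r
    using prob_vec_average_01[OF prob_vec_exp_weights[OF K, of \<eta> "S r"], of "A (e r)"]
      prob_vec_average_01[OF q, of "A (e r)"] A[OF that] \<beta>[OF that]
    by (auto simp: x_def y_def p_def)
  have c: "\<bar>c r j\<bar> \<le> L" if "r < T" "j < K" for r j
    using mult_mono[OF bounded_subgradientD(1)[OF cvx lip x[OF that(1)]], of "\<bar>A (e r) j\<bar>" 1]
      A[OF that] by (auto simp: c_def g_def abs_mult lipschitz_on_nonneg[OF lip])
  have linearize: "f (x r) - f (y r) \<le> (\<Sum>j<K. p r j * c r j) - (\<Sum>j<K. q j * c r j)" if "r < T" for r
  proof -
    have "f (x r) + g r * (y r - x r) \<le> f (y r)"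
      unfolding g_def using bounded_subgradientD(2)[OF cvx lip x[OF that] y[OF that]] .
    moreover have "g r * (x r - y r) = (\<Sum>j<K. p r j * c r j) - (\<Sum>j<K. q j * c r j)"
      by (simp add: x_def y_def c_def sum_distrib_left algebra_simps)
    ultimately show ?thesis by (simp add: algebra_simps)
  qed
  have "(\<Sum>r<T. f (x r)) - (\<Sum>r<T. f (y r)) = (\<Sum>r<T. f (x r) - f (y r))"
    by (simp add: sum_subtractf)
  also have "\<dots> \<le> (\<Sum>r<T. (\<Sum>j<K. p r j * c r j) - (\<Sum>j<K. q j * c r j))"
    using linearize by (intro sum_mono) auto
  also have "\<dots> \<le> ln K / \<eta> + \<eta> * T * L\<^sup>2"
    using exp_weights_regret[OF K \<eta> c q] by (simp add: p_def S_sum sum_subtractf)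
  finally show ?thesis by (simp add: x_def y_def p_def S_def hedge_strategy_def)
qed

lemma lipschitz_regret_le:
  fixes T :: nat
  assumes lip: "L-lipschitz_on {-1..1} f"
    and P: "\<And>r. r < T \<Longrightarrow> prob_vec K (P r)" and q: "prob_vec K q"
    and a: "\<And>r j. r < T \<Longrightarrow> j < K \<Longrightarrow> a r j \<in> {0..1}" and \<beta>: "\<And>r. r < T \<Longrightarrow> \<beta> r \<in> {0..1}"
  shows "(\<Sum>r<T. f ((\<Sum>j<K. P r j * a r j) - \<beta> r)) - (\<Sum>r<T. f ((\<Sum>j<K. q j * a r j) - \<beta> r)) \<le> L * T"
proof -
  have "f ((\<Sum>j<K. P r j * a r j) - \<beta> r) - f ((\<Sum>j<K. q j * a r j) - \<beta> r) \<le> L" if r: "r < T" for r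
  proof -
    define u where "u = (\<Sum>j<K. P r j * a r j)"
    define v where "v = (\<Sum>j<K. q j * a r j)"
    have u: "u \<in> {0..1}" and v: "v \<in> {0..1}"
      unfolding u_def v_def using prob_vec_average_01 P[OF r] q a[OF r] by auto
    then have "dist (f (u - \<beta> r)) (f (v - \<beta> r)) \<le> L * dist (u - \<beta> r) (v - \<beta> r)"
      using \<beta>[OF r] by (intro lipschitz_onD[OF lip]) auto
    also have "\<dots> \<le> L" using u v lipschitz_on_nonneg[OF lip]
      by (intro mult_left_le) (auto simp: dist_real_def)
    finally show ?thesis by (simp add: u_def v_def dist_real_def)
  qed
  then have "(\<Sum>r<T. f ((\<Sum>j<K. P r j * a r j) - \<beta> r) - f ((\<Sum>j<K. q j * a r j) - \<beta> r)) \<le> (\<Sum>r<T. L)"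
    by (intro sum_mono) auto
  then show ?thesis by (simp add: sum_subtractf mult.commute[of L])
qed

lemma tuned_learning_rate:
  fixes K T :: nat and L \<eta> :: real
  assumes "0 < L" "0 < ln K" "ln K < T"
  defines "\<eta> \<equiv> sqrt (ln K / T) / L"
  shows "0 < \<eta>" "\<eta> * L \<le> 1" "ln K / \<eta> + \<eta> * T * L\<^sup>2 = 2 * L * sqrt (T * ln K)"
proof -
  define u where "u = sqrt (ln K)"
  define v where "v = sqrt T"
  have uv: "0 < u" "u < v" "u * u = ln K" "v * v = T"
    using assms(2,3) by (auto simp: u_def v_def)
  have \<eta>_uv: "\<eta> = u / (v * L)" by (simp add: \<eta>_def u_def v_def real_sqrt_divide)
  show "0 < \<eta>" "\<eta> * L \<le> 1" using uv assms(1) by (simp_all add: \<eta>_uv)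
  have "ln K / \<eta> + \<eta> * T * L\<^sup>2 = 2 * L * (v * u)"
    unfolding \<eta>_uv uv(3,4)[symmetric] using uv(1,2) assms(1)
    by (simp add: field_simps power2_eq_square)
  then show "ln K / \<eta> + \<eta> * T * L\<^sup>2 = 2 * L * sqrt (T * ln K)"
    by (simp add: u_def v_def real_sqrt_mult)
qed

lemma hedge_strategy_regret_sqrt:
  fixes A :: "'e \<Rightarrow> nat \<Rightarrow> real" and T :: nat and \<eta> :: real
  assumes K: "0 < K" and cvx: "convex_on {-1..1} f" and lip: "L-lipschitz_on {-1..1} f"
    and A: "\<And>r j. r < T \<Longrightarrow> j < K \<Longrightarrow> A (e r) j \<in> {0..1}"
    and \<beta>: "\<And>r. r < T \<Longrightarrow> \<beta> r \<in> {0..1}" and q: "prob_vec K q"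
  defines "\<eta> \<equiv> sqrt (ln K / T) / L"
  shows "(\<Sum>r<T. f ((\<Sum>j<K. hedge_strategy K \<eta> f L A (map (\<lambda>s. (e s, \<beta> s)) [0..<r]) j
                          * A (e r) j) - \<beta> r))
           - (\<Sum>r<T. f ((\<Sum>j<K. q j * A (e r) j) - \<beta> r)) \<le> 2 * L * sqrt (T * ln K)"
    (is "?R \<le> _")
proof -
  define p where "p r = hedge_strategy K \<eta> f L A (map (\<lambda>s. (e s, \<beta> s)) [0..<r])" for r
  have p: "prob_vec K (p r)" for r
    unfolding p_def hedge_strategy_def by (rule prob_vec_exp_weights[OF K])
  have L: "0 \<le> L" using lipschitz_on_nonneg[OF lip] .
  \<comment> \<open>For \<open>T \<le> ln K\<close> the tuned rate exceeds \<open>1 / L\<close>; there the trivial bound \<open>L T\<close> suffices.\<close>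
  consider "K = 1" | "1 < K" "L = 0 \<or> T \<le> ln K" | "1 < K" "0 < L" "ln K < T"
    using K L by fastforce
  then show ?thesis
  proof cases
    case 1
    then have "p r 0 = 1" "q 0 = 1" for r using p[of r] q by (simp_all add: prob_vec_def)
    then show ?thesis unfolding p_def[symmetric] using 1 by simp
  next
    case 2
    have "?R \<le> L * T"
      unfolding p_def[symmetric] by (rule lipschitz_regret_le[OF lip p q A \<beta>])
    also have "L * T \<le> L * sqrt (T * ln K)"
    proof (cases "L = 0")
      case False
      then have "real T * T \<le> T * ln K" using 2 by (intro mult_left_mono) auto
      then have "sqrt (real T * T) \<le> sqrt (T * ln K)" by (rule real_sqrt_le_mono)
      then show ?thesis using L by (intro mult_left_mono) auto
    qed simp
    also have "\<dots> \<le> 2 * L * sqrt (T * ln K)" using 2 L by simp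
    finally show ?thesis .
  next
    case 3
    then have "0 < ln K" by simp
    note step = tuned_learning_rate[OF \<open>0 < L\<close> this \<open>ln K < T\<close>, folded \<eta>_def]
    show ?thesis
      using hedge_strategy_regret[where A = A and e = e and \<beta> = \<beta> and T = T,
          OF K cvx lip step(1,2) A \<beta> q] step(3)
      by simp
  qed
qed

lemma hedge_strategy_protocol_regret:
  fixes A :: "'e \<Rightarrow> nat \<Rightarrow> real" and T :: nat
  assumes K: "0 < K" and cvx: "convex_on {-1..1} f" and lip: "L-lipschitz_on {-1..1} f"
    and A: "\<And>t j. t \<in> {1..T} \<Longrightarrow> j < K \<Longrightarrow> A (e t) j \<in> {0..1}"
    and \<beta>: "\<And>t. t \<in> {1..T} \<Longrightarrow> \<beta> t \<in> {0..1}" and q: "prob_vec K q"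
  shows "(\<Sum>t=1..T. f ((\<Sum>j<K. hedge_strategy K (sqrt (ln K / T) / L) f L A
                            (map (\<lambda>s. (e s, \<beta> s)) [1..<t]) j * A (e t) j) - \<beta> t))
           - (\<Sum>t=1..T. f ((\<Sum>j<K. q j * A (e t) j) - \<beta> t)) \<le> 2 * L * sqrt (T * ln K)"
proof -
  have "[1..<Suc r] = map Suc [0..<r]" for r by (simp add: map_Suc_upt)
  then have "map (\<lambda>s. (e s, \<beta> s)) [1..<Suc r] = map (\<lambda>s. (e (Suc s), \<beta> (Suc s))) [0..<r]" for r
    by simp
  then show ?thesis
    using hedge_strategy_regret_sqrt[where e = "\<lambda>r. e (Suc r)" and \<beta> = "\<lambda>r. \<beta> (Suc r)" and A = A
        and T = T, OF K cvx lip _ _ q] A \<beta>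
    by (simp add: sum.atLeast1_atMost_eq)
qed

lemma msum_carrier:
  "(\<And>x. x \<in> set xs \<Longrightarrow> f x \<in> carrier_mat m m) \<Longrightarrow> msum m f xs \<in> carrier_mat m m"
  by (induction xs) (auto simp: msum_def)

lemma index_msum:
  assumes "\<And>x. x \<in> set xs \<Longrightarrow> f x \<in> carrier_mat m m" and "i < m" "j < m"
  shows "msum m f xs $$ (i, j) = (\<Sum>x\<leftarrow>xs. f x $$ (i, j))"
  using assms
proof (induction xs)
  case (Cons x xs)
  then show ?case using msum_carrier[of xs f m] by (simp add: msum_def)
qed (simp add: msum_def)

lemma mtrace_mult:
  "A \<in> carrier_mat m k \<Longrightarrow> B \<in> carrier_mat k m \<Longrightarrow>
    mtrace (A * B) = (\<Sum>i<m. \<Sum>j<k. A $$ (i, j) * B $$ (j, i))"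
  by (simp add: mtrace_def scalar_prod_def atLeast0LessThan)

lemma mtrace_add: "A \<in> carrier_mat m m \<Longrightarrow> B \<in> carrier_mat m m \<Longrightarrow> mtrace (A + B) = mtrace A + mtrace B"
  by (simp add: mtrace_def sum.distrib)

lemma mtrace_minus:
  "A \<in> carrier_mat m m \<Longrightarrow> B \<in> carrier_mat m m \<Longrightarrow> mtrace (A - B) = mtrace A - mtrace B"
  by (simp add: mtrace_def sum_subtractf)

lemma mtrace_smult: "A \<in> carrier_mat m m \<Longrightarrow> mtrace (c \<cdot>\<^sub>m A) = c * mtrace A"
  by (simp add: mtrace_def sum_distrib_left)

lemma mtrace_mult_msum:
  assumes E: "E \<in> carrier_mat m m" and f: "\<And>x. x \<in> set xs \<Longrightarrow> f x \<in> carrier_mat m m"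
  shows "mtrace (E * msum m f xs) = (\<Sum>x\<leftarrow>xs. mtrace (E * f x))"
  using f
proof (induction xs)
  case Nil
  then show ?case using E by (simp add: msum_def mtrace_def)
next
  case (Cons x xs)
  have fx: "f x \<in> carrier_mat m m" and rest: "msum m f xs \<in> carrier_mat m m"
    using Cons.prems msum_carrier[of xs f m] by auto
  have "E * msum m f (x # xs) = E * f x + E * msum m f xs"
    using mult_add_distrib_mat[OF E fx rest] by (simp add: msum_def)
  then show ?case using Cons E fx rest by (simp add: mtrace_add[of _ m])
qed

lemma mult_add_less_mult_nat: "i < m \<Longrightarrow> a < n \<Longrightarrow> i * n + a < m * (n :: nat)"
proof -
  assume "i < m" "a < n"
  then have "i * n + a < Suc i * n" by simp
  also have "\<dots> \<le> m * n" using \<open>i < m\<close> by (intro mult_right_mono) auto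
  finally show ?thesis .
qed

lemma sum_lessThan_mult_nat:
  fixes f :: "nat \<Rightarrow> 'a :: comm_monoid_add"
  shows "(\<Sum>x<m * n. f x) = (\<Sum>i<m. \<Sum>a<n. f (i * n + a))"
proof -
  have "sum f {i * n..<i * n + n} = (\<Sum>a<n. f (i * n + a))" for i
    using sum.shift_bounds_nat_ivl[of f 0 "i * n" n] by (simp add: atLeast0LessThan add.commute)
  then show ?thesis by (simp add: sum.nat_group[symmetric])
qed

lemma ketbra_carrier: "ketbra d i j \<in> carrier_mat d d"
  by (simp add: ketbra_def)

lemma index_ketbra: "a < d \<Longrightarrow> b < d \<Longrightarrow> ketbra d i j $$ (a, b) = (if a = i \<and> b = j then 1 else 0)"
  by (simp add: ketbra_def)

lemma index_kron:
  "i < dim_row A * dim_row B \<Longrightarrow> j < dim_col A * dim_col B \<Longrightarrow>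
    kron A B $$ (i, j)
      = A $$ (i div dim_row B, j div dim_col B) * B $$ (i mod dim_row B, j mod dim_col B)"
  by (simp add: kron_def)

lemma kron_ketbra_carrier:
  assumes "\<And>X. X \<in> carrier_mat d d \<Longrightarrow> \<Phi> X \<in> carrier_mat d d"
  shows "kron (ketbra d i j) (\<Phi> (ketbra d i j)) \<in> carrier_mat (d * d) (d * d)"
  using carrier_matD[OF assms[OF ketbra_carrier]] carrier_matD[OF ketbra_carrier]
  by (simp add: kron_def)

lemma choi_carrier:
  assumes "\<And>X. X \<in> carrier_mat d d \<Longrightarrow> \<Phi> X \<in> carrier_mat d d"
  shows "choi d \<Phi> \<in> carrier_mat (d * d) (d * d)"
  unfolding choi_def using kron_ketbra_carrier[OF assms] by (intro msum_carrier) auto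

lemma index_choi:
  assumes \<Phi>: "\<And>X. X \<in> carrier_mat d d \<Longrightarrow> \<Phi> X \<in> carrier_mat d d" and xy: "x < d * d" "y < d * d"
  shows "choi d \<Phi> $$ (x, y) = \<Phi> (ketbra d (x div d) (y div d)) $$ (x mod d, y mod d)"
proof -
  have dims: "dim_row (\<Phi> (ketbra d i j)) = d" "dim_col (\<Phi> (ketbra d i j)) = d" for i j
    using \<Phi>[OF ketbra_carrier] by auto
  have div: "x div d < d" "y div d < d" using xy by (simp_all add: less_mult_imp_div_less)
  have "0 < d" using xy by (cases d) auto
  then have mod: "x mod d < d" "y mod d < d" by simp_all
  note kron = kron_ketbra_carrier[OF \<Phi>]
  have "choi d \<Phi> $$ (x, y) = (\<Sum>(i, j)\<leftarrow>List.product [0..<d] [0..<d].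
      kron (ketbra d i j) (\<Phi> (ketbra d i j)) $$ (x, y))"
    unfolding choi_def using kron xy by (subst index_msum) (auto simp: split_def)
  also have "\<dots> = (\<Sum>(i, j)\<in>{..<d} \<times> {..<d}. kron (ketbra d i j) (\<Phi> (ketbra d i j)) $$ (x, y))"
    by (simp add: sum_list_distinct_conv_sum_set distinct_product atLeast0LessThan)
  also have "\<dots> = (\<Sum>p\<in>{..<d} \<times> {..<d}.
      if p = (x div d, y div d) then \<Phi> (ketbra d (x div d) (y div d)) $$ (x mod d, y mod d) else 0)"
    using carrier_matD[OF ketbra_carrier] xy div mod
    by (intro sum.cong refl) (auto simp: index_kron dims index_ketbra split: if_splits)
  also have "\<dots> = \<Phi> (ketbra d (x div d) (y div d)) $$ (x mod d, y mod d)"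
    using div by (simp add: sum.delta)
  finally show ?thesis .
qed

lemma linear_map_on_carrier: "linear_map_on d \<Phi> \<Longrightarrow> X \<in> carrier_mat d d \<Longrightarrow> \<Phi> X \<in> carrier_mat d d"
  by (simp add: linear_map_on_def)

lemma choi_carrier_linear: "linear_map_on d \<Phi> \<Longrightarrow> choi d \<Phi> \<in> carrier_mat (d * d) (d * d)"
  by (rule choi_carrier[OF linear_map_on_carrier])

lemma mixture_choi_carrier:
  assumes "\<And>j. j < K \<Longrightarrow> linear_map_on d (Ns j)"
  shows "mixture_choi d K Ns p \<in> carrier_mat (d * d) (d * d)"
  unfolding mixture_choi_def using choi_carrier_linear[OF assms] by (intro msum_carrier) auto

lemma trace_mixture_choi:
  assumes E: "E \<in> carrier_mat (d * d) (d * d)" and Ns: "\<And>j. j < K \<Longrightarrow> linear_map_on d (Ns j)"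
  shows "Re (mtrace (E * mixture_choi d K Ns p)) = (\<Sum>j<K. p j * Re (mtrace (E * choi d (Ns j))))"
proof -
  note C = choi_carrier_linear[OF Ns]
  have "mtrace (E * mixture_choi d K Ns p)
      = (\<Sum>j\<leftarrow>[0..<K]. mtrace (E * (complex_of_real (p j) \<cdot>\<^sub>m choi d (Ns j))))"
    unfolding mixture_choi_def using C by (intro mtrace_mult_msum[OF E]) auto
  also have "\<dots> = (\<Sum>j<K. mtrace (E * (complex_of_real (p j) \<cdot>\<^sub>m choi d (Ns j))))"
    by (simp add: interv_sum_list_conv_sum_set_nat atLeast0LessThan)
  also have "\<dots> = (\<Sum>j<K. complex_of_real (p j) * mtrace (E * choi d (Ns j)))"
  proof (rule sum.cong[OF refl])
    fix j assume "j \<in> {..<K}"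
    then have C: "choi d (Ns j) \<in> carrier_mat (d * d) (d * d)" using C by simp
    show "mtrace (E * (complex_of_real (p j) \<cdot>\<^sub>m choi d (Ns j)))
        = complex_of_real (p j) * mtrace (E * choi d (Ns j))"
      using mult_smult_distrib[OF E C] mtrace_smult[OF mult_carrier_mat[OF E C]] by simp
  qed
  finally show ?thesis by (simp add: Re_sum)
qed

lemma choi_in_channel_hull:
  assumes hull: "in_channel_hull d K Ns \<Phi>" and Ns: "\<And>j. j < K \<Longrightarrow> linear_map_on d (Ns j)"
  obtains q where "prob_vec K q" "choi d \<Phi> = mixture_choi d K Ns q"
proof -
  obtain q where q: "prob_vec K q"
    and \<Phi>: "\<And>X. X \<in> carrier_mat d d \<Longrightarrow> \<Phi> X = msum d (\<lambda>j. complex_of_real (q j) \<cdot>\<^sub>m Ns j X) [0..<K]"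
    using hull by (auto simp: in_channel_hull_def)
  have NsC: "Ns j X \<in> carrier_mat d d" if "j < K" "X \<in> carrier_mat d d" for j X
    using linear_map_on_carrier[OF Ns[OF that(1)] that(2)] .
  have \<Phi>_carrier: "\<Phi> X \<in> carrier_mat d d" if "X \<in> carrier_mat d d" for X
    unfolding \<Phi>[OF that] using NsC that by (intro msum_carrier) auto
  have entry: "choi d \<Phi> $$ (x, y) = mixture_choi d K Ns q $$ (x, y)"
    if xy: "x < d * d" "y < d * d" for x y
  proof -
    let ?k = "ketbra d (x div d) (y div d)"
    have "0 < d" using xy by (cases d) auto
    then have mod: "x mod d < d" "y mod d < d" by simp_all
    have choi_j: "(complex_of_real (q j) \<cdot>\<^sub>m choi d (Ns j)) $$ (x, y)
        = (complex_of_real (q j) \<cdot>\<^sub>m Ns j ?k) $$ (x mod d, y mod d)" if "j < K" for j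
      using index_choi[OF linear_map_on_carrier[OF Ns[OF that]] xy]
        choi_carrier_linear[OF Ns[OF that]]
        carrier_matD[OF NsC[OF that ketbra_carrier]] xy mod by simp
    have summands: "complex_of_real (q j) \<cdot>\<^sub>m Ns j ?k \<in> carrier_mat d d" if "j \<in> set [0..<K]" for j
      using NsC[OF _ ketbra_carrier] that by simp
    have "choi d \<Phi> $$ (x, y)
        = msum d (\<lambda>j. complex_of_real (q j) \<cdot>\<^sub>m Ns j ?k) [0..<K] $$ (x mod d, y mod d)"
      by (simp add: index_choi[OF \<Phi>_carrier xy] \<Phi>[OF ketbra_carrier])
    also have "\<dots> = (\<Sum>j\<leftarrow>[0..<K]. (complex_of_real (q j) \<cdot>\<^sub>m Ns j ?k) $$ (x mod d, y mod d))"
      by (rule index_msum[OF summands mod])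
    also have "\<dots> = (\<Sum>j\<leftarrow>[0..<K]. (complex_of_real (q j) \<cdot>\<^sub>m choi d (Ns j)) $$ (x, y))"
      using choi_j by (intro arg_cong[where f = sum_list] map_cong) auto
    also have "\<dots> = mixture_choi d K Ns q $$ (x, y)"
      unfolding mixture_choi_def using choi_carrier_linear[OF Ns]
      by (intro index_msum[symmetric] xy) auto
    finally show ?thesis .
  qed
  have "choi d \<Phi> = mixture_choi d K Ns q"
    using mixture_choi_carrier[of K d Ns q, OF Ns] choi_carrier[of d \<Phi>, OF \<Phi>_carrier] entry
    by (intro eq_matI) auto
  with q show ?thesis by (rule that)
qed

lemma trace_kron_identity_choi:
  assumes \<sigma>: "\<sigma> \<in> carrier_mat d d" and \<Phi>: "linear_map_on d \<Phi>" and tp: "trace_preserving d \<Phi>"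
  shows "mtrace (kron \<sigma> (1\<^sub>m d) * choi d \<Phi>) = mtrace \<sigma>"
proof -
  note \<Phi>_carrier = linear_map_on_carrier[OF \<Phi>]
  have dim: "dim_row (\<Phi> (ketbra d j i)) = d" for i j using \<Phi>_carrier[OF ketbra_carrier] by auto
  have tr: "mtrace (\<Phi> (ketbra d j i)) = of_bool (i = j)" if "i < d" "j < d" for i j
    using tp that
    by (cases "i = j")
      (auto simp: trace_preserving_def ketbra_def mtrace_def sum.delta intro!: sum.neutral)
  have kron: "kron \<sigma> (1\<^sub>m d) \<in> carrier_mat (d * d) (d * d)" using \<sigma> by (simp add: kron_def)
  have kron_entry: "kron \<sigma> (1\<^sub>m d) $$ (i * d + a, j * d + b) = \<sigma> $$ (i, j) * of_bool (a = b)"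
    if "i < d" "a < d" "j < d" "b < d" for i a j b
    using \<sigma> that by (simp add: kron_def mult_add_less_mult_nat)
  have "mtrace (kron \<sigma> (1\<^sub>m d) * choi d \<Phi>) = (\<Sum>i<d. \<Sum>a<d. \<Sum>j<d. \<Sum>b<d.
      kron \<sigma> (1\<^sub>m d) $$ (i * d + a, j * d + b) * choi d \<Phi> $$ (j * d + b, i * d + a))"
    using kron choi_carrier_linear[OF \<Phi>] by (simp add: mtrace_mult sum_lessThan_mult_nat)
  also have "\<dots> = (\<Sum>i<d. \<Sum>a<d. \<Sum>j<d. \<Sum>b<d.
      if b = a then \<sigma> $$ (i, j) * \<Phi> (ketbra d j i) $$ (a, a) else 0)"
    by (intro sum.cong refl) (simp add: kron_entry index_choi[OF \<Phi>_carrier] mult_add_less_mult_nat)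
  also have "\<dots> = (\<Sum>i<d. \<Sum>a<d. \<Sum>j<d. \<sigma> $$ (i, j) * \<Phi> (ketbra d j i) $$ (a, a))"
    by (simp add: sum.delta)
  also have "\<dots> = (\<Sum>i<d. \<Sum>j<d. \<Sum>a<d. \<sigma> $$ (i, j) * \<Phi> (ketbra d j i) $$ (a, a))"
    by (rule sum.cong[OF refl], rule sum.swap)
  also have "\<dots> = (\<Sum>i<d. \<Sum>j<d. \<sigma> $$ (i, j) * mtrace (\<Phi> (ketbra d j i)))"
    using dim by (simp add: mtrace_def sum_distrib_left)
  also have "\<dots> = (\<Sum>i<d. \<Sum>j<d. if j = i then \<sigma> $$ (i, j) else 0)"
    by (intro sum.cong refl) (simp add: tr)
  also have "\<dots> = mtrace \<sigma>"
    using \<sigma> by (simp add: mtrace_def)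
  finally show ?thesis .
qed

lemma sum_by_fibres:
  fixes u :: "'a \<Rightarrow> 'c :: comm_semiring_0"
  assumes "finite S" "finite T" "\<pi> ` S \<subseteq> T"
  shows "(\<Sum>I\<in>S. u I * h (\<pi> I)) = (\<Sum>y\<in>T. (\<Sum>I | I \<in> S \<and> \<pi> I = y. u I) * h y)"
proof -
  have "(\<Sum>y\<in>T. (\<Sum>I | I \<in> S \<and> \<pi> I = y. u I) * h y) = (\<Sum>y\<in>T. \<Sum>I | I \<in> S \<and> \<pi> I = y. u I * h (\<pi> I))"
    by (intro sum.cong refl) (simp add: sum_distrib_right)
  also have "\<dots> = (\<Sum>I\<in>S. u I * h (\<pi> I))" using assms by (rule sum.group)
  finally show ?thesis ..
qed

lemma psd_transposed_pullback:
  fixes E :: "complex mat" and \<alpha> :: "nat \<Rightarrow> complex"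
  assumes E: "psd D E" and \<pi>: "\<And>I. I < N \<Longrightarrow> \<pi> I < D"
  shows "psd N (mat N N (\<lambda>(I, J). \<alpha> I * E $$ (\<pi> J, \<pi> I) * cnj (\<alpha> J)))" (is "psd N ?X")
  unfolding psd_def
proof (intro conjI ballI)
  fix w :: "complex vec" assume w: "w \<in> carrier_vec N"
  have E_carrier: "E \<in> carrier_mat D D" using E by (simp add: psd_def)
  have fib: "\<pi> ` {..<N} \<subseteq> {..<D}" using \<pi> by auto
  define a where "a y = (\<Sum>I | I \<in> {..<N} \<and> \<pi> I = y. cnj (w $ I) * \<alpha> I)" for y
  define z where "z = vec D a"
  have "conjugate w \<bullet> (?X *\<^sub>v w)
      = (\<Sum>I<N. (cnj (w $ I) * \<alpha> I) * (\<Sum>J<N. (cnj (\<alpha> J) * w $ J) * E $$ (\<pi> J, \<pi> I)))"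
    using w by (simp add: scalar_prod_def atLeast0LessThan sum_distrib_left mult_ac)
  also have "\<dots> = (\<Sum>I<N. (cnj (w $ I) * \<alpha> I) * (\<Sum>x<D. cnj (a x) * E $$ (x, \<pi> I)))"
  proof -
    have "(\<Sum>J<N. (cnj (\<alpha> J) * w $ J) * E $$ (\<pi> J, y)) = (\<Sum>x<D. cnj (a x) * E $$ (x, y))" for y
      using sum_by_fibres[OF _ _ fib, of "\<lambda>J. cnj (\<alpha> J) * w $ J" "\<lambda>x. E $$ (x, y)"]
      by (simp add: a_def cnj_sum mult_ac)
    then show ?thesis by simp
  qed
  also have "\<dots> = (\<Sum>y<D. a y * (\<Sum>x<D. cnj (a x) * E $$ (x, y)))"
    using sum_by_fibres[OF _ _ fib, of "\<lambda>I. cnj (w $ I) * \<alpha> I"] by (simp add: a_def)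
  also have "\<dots> = (\<Sum>x<D. \<Sum>y<D. cnj (a x) * E $$ (x, y) * a y)"
    by (subst sum.swap) (simp add: sum_distrib_left mult_ac)
  also have "\<dots> = conjugate z \<bullet> (E *\<^sub>v z)"
    using E_carrier by (simp add: z_def scalar_prod_def atLeast0LessThan sum_distrib_left mult_ac)
  finally have "conjugate w \<bullet> (?X *\<^sub>v w) = conjugate z \<bullet> (E *\<^sub>v z)" .
  moreover have "z \<in> carrier_vec D" by (simp add: z_def)
  ultimately show "Im (conjugate w \<bullet> (?X *\<^sub>v w)) = 0" "0 \<le> Re (conjugate w \<bullet> (?X *\<^sub>v w))"
    using E by (simp_all add: psd_def)
qed simp

text \<open>With \<open>k = i d + a\<close> and \<open>l = j d + b\<close> below \<open>d\<^sup>2\<close>, \<open>test_lift d E\<close> is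
  \<open>\<Sum>k l. E\<^sub>l\<^sub>k |k, i\<rangle>\<langle>l, j|\<close>: the transpose of \<open>E\<close> with the first index of \<open>k\<close> copied
  into a third register. Applying \<open>id \<otimes> \<Phi>\<close> to that register and evaluating the quadratic form
  at \<open>\<Sum>k |k, a\<rangle>\<close> gives \<open>tr (E C(\<Phi>))\<close>, so complete positivity alone yields its
  nonnegativity, without spectral theory.\<close>

definition test_lift :: "nat \<Rightarrow> complex mat \<Rightarrow> complex mat" where
  "test_lift d E = mat (d * d * d) (d * d * d) (\<lambda>(I, J).
     of_bool (I mod d = I div d div d) * E $$ (J div d, I div d)
       * of_bool (J mod d = J div d div d))"

lemma cnj_of_bool [simp]: "cnj (of_bool b) = of_bool b"
  by (cases b) simp_all

lemma psd_test_lift: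
  assumes "psd (d * d) E"
  shows "psd (d * d * d) (test_lift d E)"
proof -
  have "test_lift d E = mat (d * d * d) (d * d * d) (\<lambda>(I, J).
      of_bool (I mod d = I div d div d) * E $$ (J div d, I div d)
        * cnj (of_bool (J mod d = J div d div d)))"
    by (simp add: test_lift_def)
  also have "psd (d * d * d) \<dots>"
    using assms by (intro psd_transposed_pullback) (auto simp: less_mult_imp_div_less)
  finally show ?thesis .
qed

lemma index_id_tensor_test_lift:
  assumes \<Phi>: "linear_map_on d \<Phi>" and kl: "k < d * d" "l < d * d"
  shows "id_tensor (d * d) d \<Phi> (test_lift d E) $$ (k * d + k mod d, l * d + l mod d)
    = E $$ (l, k) * choi d \<Phi> $$ (k, l)"
proof -
  have "0 < d" using kl by (cases d) auto
  then have mod: "k mod d < d" "l mod d < d" by simp_all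
  have block: "mat d d (\<lambda>(a, b). test_lift d E $$ (k * d + a, l * d + b))
      = E $$ (l, k) \<cdot>\<^sub>m ketbra d (k div d) (l div d)"
    using kl by (intro eq_matI) (auto simp: test_lift_def ketbra_def mult_add_less_mult_nat)
  have "id_tensor (d * d) d \<Phi> (test_lift d E) $$ (k * d + k mod d, l * d + l mod d)
      = \<Phi> (E $$ (l, k) \<cdot>\<^sub>m ketbra d (k div d) (l div d)) $$ (k mod d, l mod d)"
    using kl mod by (simp add: id_tensor_def mult_add_less_mult_nat block[symmetric])
  also have "\<dots> = E $$ (l, k) * \<Phi> (ketbra d (k div d) (l div d)) $$ (k mod d, l mod d)"
    using \<Phi> carrier_matD[OF linear_map_on_carrier[OF \<Phi> ketbra_carrier]] mod
    by (simp add: linear_map_on_def ketbra_carrier)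
  also have "\<dots> = E $$ (l, k) * choi d \<Phi> $$ (k, l)"
    by (simp add: index_choi[OF linear_map_on_carrier[OF \<Phi>] kl])
  finally show ?thesis .
qed

lemma quadratic_form_indicator:
  fixes Y :: "complex mat"
  assumes Y: "Y \<in> carrier_mat N N" and S: "S \<subseteq> {..<N}"
  defines "v \<equiv> vec N (\<lambda>I. of_bool (I \<in> S))"
  shows "conjugate v \<bullet> (Y *\<^sub>v v) = (\<Sum>I\<in>S. \<Sum>J\<in>S. Y $$ (I, J))"
proof -
  have restrict: "(\<Sum>I<N. of_bool (I \<in> S) * f I) = (\<Sum>I\<in>S. f I)" for f :: "nat \<Rightarrow> complex"
  proof -
    have "(\<Sum>I<N. of_bool (I \<in> S) * f I) = (\<Sum>I<N. if I \<in> S then f I else 0)"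
      by (intro sum.cong) auto
    also have "\<dots> = sum f ({..<N} \<inter> S)" by (simp add: sum.inter_restrict)
    finally show ?thesis using S by (simp add: Int_absorb1)
  qed
  have "conjugate v \<bullet> (Y *\<^sub>v v) = (\<Sum>I<N. of_bool (I \<in> S) * (\<Sum>J<N. of_bool (J \<in> S) * Y $$ (I, J)))"
    using Y by (simp add: v_def scalar_prod_def atLeast0LessThan mult.commute)
  then show ?thesis by (simp add: restrict)
qed

lemma choi_trace_nonneg:
  assumes E: "psd (d * d) E" and \<Phi>: "linear_map_on d \<Phi>" "completely_positive d \<Phi>"
  shows "0 \<le> Re (mtrace (E * choi d \<Phi>))"
proof -
  define Y where "Y = id_tensor (d * d) d \<Phi> (test_lift d E)"
  define diag where "diag k = k * d + k mod d" for k
  define v :: "complex vec" where "v = vec (d * d * d) (\<lambda>I. of_bool (I \<in> diag ` {..<d * d}))"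
  have Y: "psd (d * d * d) Y"
    using \<Phi>(2) psd_test_lift[OF E] by (simp add: completely_positive_def Y_def)
  have diag_less: "diag k < d * d * d" if "k < d * d" for k
  proof -
    have "0 < d" using that by (cases d) auto
    then show ?thesis using that by (simp add: diag_def mult_add_less_mult_nat)
  qed
  have "inj_on diag {..<d * d}"
  proof (rule inj_on_inverseI[of _ "\<lambda>I. I div d"])
    fix k assume "k \<in> {..<d * d}"
    then have "0 < d" by (cases d) auto
    then show "diag k div d = k" by (simp add: diag_def)
  qed
  then have "conjugate v \<bullet> (Y *\<^sub>v v) = (\<Sum>k<d * d. \<Sum>l<d * d. Y $$ (diag k, diag l))"
    using Y diag_less unfolding v_def
    by (subst quadratic_form_indicator) (auto simp: psd_def sum.reindex)
  also have "\<dots> = (\<Sum>k<d * d. \<Sum>l<d * d. E $$ (l, k) * choi d \<Phi> $$ (k, l))"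
    by (intro sum.cong refl) (simp add: Y_def diag_def index_id_tensor_test_lift[OF \<Phi>(1)])
  also have "\<dots> = mtrace (E * choi d \<Phi>)"
    using E by (subst sum.swap)
      (simp add: psd_def mtrace_mult[OF _ choi_carrier_linear[OF \<Phi>(1)]] mult.commute)
  finally have "conjugate v \<bullet> (Y *\<^sub>v v) = mtrace (E * choi d \<Phi>)" .
  moreover have "0 \<le> Re (conjugate v \<bullet> (Y *\<^sub>v v))" using Y by (simp add: psd_def v_def)
  ultimately show ?thesis by simp
qed

lemma channel_test_trace_choi_01:
  assumes E: "channel_test_op d E"
    and \<Phi>: "linear_map_on d \<Phi>" "completely_positive d \<Phi>" "trace_preserving d \<Phi>"
  shows "Re (mtrace (E * choi d \<Phi>)) \<in> {0..1}"
proof -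
  obtain \<sigma> where \<sigma>: "density_op d \<sigma>" and le: "loewner_le (d * d) E (kron \<sigma> (1\<^sub>m d))"
    using E by (auto simp: channel_test_op_def)
  have E_carrier: "E \<in> carrier_mat (d * d) (d * d)" and \<sigma>_carrier: "\<sigma> \<in> carrier_mat d d"
    and tr\<sigma>: "mtrace \<sigma> = 1"
    using E \<sigma> by (auto simp: channel_test_op_def density_op_def psd_def)
  have K: "kron \<sigma> (1\<^sub>m d) \<in> carrier_mat (d * d) (d * d)" using \<sigma>_carrier by (simp add: kron_def)
  note C = choi_carrier_linear[OF \<Phi>(1)]
  have "0 \<le> Re (mtrace ((kron \<sigma> (1\<^sub>m d) - E) * choi d \<Phi>))"
    using le \<Phi>(1,2) by (intro choi_trace_nonneg) (simp_all add: loewner_le_def)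
  also have "mtrace ((kron \<sigma> (1\<^sub>m d) - E) * choi d \<Phi>) = 1 - mtrace (E * choi d \<Phi>)"
    using minus_mult_distrib_mat[OF K E_carrier C] trace_kron_identity_choi[OF \<sigma>_carrier \<Phi>(1,3)] tr\<sigma>
      mtrace_minus[OF mult_carrier_mat[OF K C] mult_carrier_mat[OF E_carrier C]] by simp
  finally show ?thesis
    using choi_trace_nonneg[of d E \<Phi>] E \<Phi> by (simp add: channel_test_op_def)
qed

lemma hedge_channel_regret:
  fixes T :: nat
  assumes K: "0 < K" and channels: "\<forall>j<K. quantum_channel n (Ns j)"
    and cvx: "convex_on {-1..1} loss" and lip: "L-lipschitz_on {-1..1} loss"
    and tests: "\<forall>t\<in>{1..T}. channel_test_op (2 ^ n) (E t) \<and> 0 \<le> b t \<and> b t \<le> 1"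
    and hull: "in_channel_hull (2 ^ n) K Ns \<Phi>"
  shows "(\<Sum>t=1..T. loss (Re (mtrace (E t * mixture_choi (2 ^ n) K Ns
            (hedge_strategy K (sqrt (ln K / T) / L) loss L
              (\<lambda>E j. Re (mtrace (E * choi (2 ^ n) (Ns j))))
              (map (\<lambda>s. (E s, b s)) [1..<t])))) - b t))
         - (\<Sum>t=1..T. loss (Re (mtrace (E t * choi (2 ^ n) \<Phi>)) - b t))
       \<le> 2 * L * sqrt (real T * ln (real K))"
proof -
  define d where "d = (2 :: nat) ^ n"
  define A where "A = (\<lambda>E j. Re (mtrace (E * choi d (Ns j))))"
  define p where
    "p t = hedge_strategy K (sqrt (ln K / T) / L) loss L A (map (\<lambda>s. (E s, b s)) [1..<t])" for t
  have lin: "linear_map_on d (Ns j)" and cp: "completely_positive d (Ns j)"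
    and tp: "trace_preserving d (Ns j)" if "j < K" for j
    using channels that by (simp_all add: quantum_channel_def d_def)
  obtain q where q: "prob_vec K q" and choi_\<Phi>: "choi d \<Phi> = mixture_choi d K Ns q"
    using choi_in_channel_hull[OF hull[folded d_def] lin] .
  have E_carrier: "E t \<in> carrier_mat (d * d) (d * d)" if "t \<in> {1..T}" for t
    using tests that by (auto simp: channel_test_op_def psd_def d_def)
  have trace_mixture: "Re (mtrace (E t * mixture_choi d K Ns r)) = (\<Sum>j<K. r j * A (E t) j)"
    if "t \<in> {1..T}" for t r
    using trace_mixture_choi[OF E_carrier[OF that] lin] by (simp add: A_def)
  have "(\<Sum>t=1..T. loss (Re (mtrace (E t * mixture_choi d K Ns (p t))) - b t))
      - (\<Sum>t=1..T. loss (Re (mtrace (E t * choi d \<Phi>)) - b t))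
      = (\<Sum>t=1..T. loss ((\<Sum>j<K. p t j * A (E t) j) - b t))
      - (\<Sum>t=1..T. loss ((\<Sum>j<K. q j * A (E t) j) - b t))"
    by (simp add: choi_\<Phi> trace_mixture)
  also have "\<dots> \<le> 2 * L * sqrt (real T * ln (real K))"
  proof -
    have A: "A (E t) j \<in> {0..1}" if "t \<in> {1..T}" "j < K" for t j
      unfolding A_def using tests that
      by (intro channel_test_trace_choi_01 lin cp tp) (auto simp: d_def)
    show ?thesis
      unfolding p_def using tests
      by (intro hedge_strategy_protocol_regret[where e = E and A = A, OF K cvx lip A _ q]) auto
  qed
  finally show ?thesis by (simp add: p_def A_def d_def)
qed

theorem corollary3p6:
  "\<exists>C::real. \<forall>(n::nat) (K::nat) (Ns :: nat \<Rightarrow> complex mat \<Rightarrow> complex mat)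
      (loss :: real \<Rightarrow> real) (L::real) (T::nat).
     0 < K \<longrightarrow> (\<forall>j<K. quantum_channel n (Ns j)) \<longrightarrow>
     convex_on {-1..1} loss \<longrightarrow> L-lipschitz_on {-1..1} loss \<longrightarrow>
     (\<exists>strat :: (complex mat \<times> real) list \<Rightarrow> nat \<Rightarrow> real.
        (\<forall>h. prob_vec K (strat h)) \<and>
        (\<forall>(E :: nat \<Rightarrow> complex mat) (b :: nat \<Rightarrow> real).
           (\<forall>t\<in>{1..T}. channel_test_op (2 ^ n) (E t) \<and> 0 \<le> b t \<and> b t \<le> 1) \<longrightarrow>
           (\<forall>\<Phi>. in_channel_hull (2 ^ n) K Ns \<Phi> \<longrightarrow>
              (\<Sum>t=1..T. loss (Re (mtrace (E t * mixture_choi (2 ^ n) K Ns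
                                   (strat (map (\<lambda>s. (E s, b s)) [1..<t])))) - b t))
              - (\<Sum>t=1..T. loss (Re (mtrace (E t * choi (2 ^ n) \<Phi>)) - b t))
              \<le> C * L * sqrt (real T * ln (real K)))))"
proof (intro exI[of _ 2] allI impI, goal_cases)
  case (1 n K Ns loss L T)
  let ?strat = "hedge_strategy K (sqrt (ln K / T) / L) loss L
    (\<lambda>E j. Re (mtrace (E * choi (2 ^ n) (Ns j))))"
  show ?case
    using 1 hedge_channel_regret[OF 1]
    by (intro exI[of _ ?strat] conjI allI impI) (auto simp: hedge_strategy_def prob_vec_exp_weights)
qed

end
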